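(* Let $\ell\in\mathbb{Z}^2$ and define the event $\Sigma=\{\mathrm{An}(\ell)\cap\mathrm{An}(0)\neq\emptyset\}\cup\{\mathrm{De}(\ell)\cap\mathrm{De}(0)\neq\emptyset\}$. Then for every $0\le p\le 1$, $$P_p\big(\mathrm{An}(\ell)\cap\mathrm{An}(0)\neq\emptyset\big)\ \ge\ 1-\big(1-P_p(\Sigma)\big)^{1/2}.$$
   Context: Oriented square lattice: node set $\mathbb{Z}^2$, with a directed edge $u\to v$ if and only if $v-u\in\{(1,0),(0,1)\}$; $E(\mathbb{Z}^2)$ denotes this edge set. Bernoulli bond percolation with parameter $p\in[0,1]$: each edge of $E(\mathbb{Z}^2)$ is independently declared open with probability $p$ and closed otherwise; $P_p$ is the resulting product measure on $\Omega=\{0,1\}^{E(\mathbb{Z}^2)}$. In a configuration, $\mathrm{An}(u)$ is the set consisting of $u$ and all nodes $v$ from which there is a directed path $v\to\cdots\to u$ consisting of open edges traversed in their orientation; $\mathrm{De}(u)$ is the set consisting of $u$ and all nodes $v$ reachable from $u$ by such a directed open path. *)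

theory Defs
  imports "HOL-Probability.Probability"
begin

type_synonym node = "int \<times> int"
type_synonym edge = "node \<times> node"

definition Edges :: "edge set" where
  "Edges = {(u, v). v = (fst u + 1, snd u) \<or> v = (fst u, snd u + 1)}"

text \<open>Bernoulli bond percolation: product of Bernoulli(p) over the edge set;
  a configuration is omega :: edge => bool (True = open).\<close>
definition perc :: "real \<Rightarrow> (edge \<Rightarrow> bool) measure" where
  "perc p = PiM Edges (\<lambda>_. measure_pmf (bernoulli_pmf p))"

definition open_step :: "(edge \<Rightarrow> bool) \<Rightarrow> node \<Rightarrow> node \<Rightarrow> bool" where
  "open_step \<omega> u v \<longleftrightarrow> (u, v) \<in> Edges \<and> \<omega> (u, v)"

definition An :: "(edge \<Rightarrow> bool) \<Rightarrow> node \<Rightarrow> node set" where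
  "An \<omega> u = {v. (open_step \<omega>)\<^sup>*\<^sup>* v u}"

definition De :: "(edge \<Rightarrow> bool) \<Rightarrow> node \<Rightarrow> node set" where
  "De \<omega> u = {v. (open_step \<omega>)\<^sup>*\<^sup>* u v}"

end

theory Submission
  imports Defs
begin

text \<open>The point reflection \<open>u \<mapsto> \<ell> - u\<close>, which reverses the orientation of every edge,
  exchanges ancestors and descendants and swaps \<open>0\<close> with \<open>\<ell>\<close>; hence the events
  \<open>A = {An(\<ell>) \<inter> An(0) \<noteq> \<emptyset>}\<close> and \<open>D = {De(\<ell>) \<inter> De(0) \<noteq> \<emptyset>}\<close> have the same probability \<open>a\<close>.
  Both events are increasing, so by the Harris inequality \<open>P(A \<inter> D) \<ge> a\<^sup>2\<close> and therefore
  \<open>P(\<Sigma>) = 2a - P(A \<inter> D) \<le> 1 - (1 - a)\<^sup>2\<close>. The Harris inequality is proved for finitely many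
  edges by induction and transferred to the whole lattice by exhausting it with boxes centred
  at \<open>\<ell>/2\<close>, which are invariant under the reflection.\<close>

lemma open_step_mono: "\<omega> \<le> \<omega>' \<Longrightarrow> open_step \<omega> u v \<Longrightarrow> open_step \<omega>' u v"
  by (metis le_boolD le_funD open_step_def)

lemma rtranclp_open_step_mono:
  assumes "\<omega> \<le> \<omega>'"
  shows "(open_step \<omega>)\<^sup>*\<^sup>* u v \<Longrightarrow> (open_step \<omega>')\<^sup>*\<^sup>* u v"
  by (induction rule: rtranclp_induct)
     (auto intro: rtranclp.rtrancl_into_rtrancl open_step_mono[OF assms])

lemma An_mono: "\<omega> \<le> \<omega>' \<Longrightarrow> An \<omega> u \<subseteq> An \<omega>' u"
  unfolding An_def using rtranclp_open_step_mono by blast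

lemma De_mono: "\<omega> \<le> \<omega>' \<Longrightarrow> De \<omega> u \<subseteq> De \<omega>' u"
  unfolding De_def using rtranclp_open_step_mono by blast

definition ancestors_meet :: "node \<Rightarrow> node \<Rightarrow> (edge \<Rightarrow> bool) \<Rightarrow> bool" where
  "ancestors_meet u v \<omega> \<longleftrightarrow> An \<omega> u \<inter> An \<omega> v \<noteq> {}"

definition descendants_meet :: "node \<Rightarrow> node \<Rightarrow> (edge \<Rightarrow> bool) \<Rightarrow> bool" where
  "descendants_meet u v \<omega> \<longleftrightarrow> De \<omega> u \<inter> De \<omega> v \<noteq> {}"

lemma ancestors_meet_mono: "\<omega> \<le> \<omega>' \<Longrightarrow> ancestors_meet u v \<omega> \<Longrightarrow> ancestors_meet u v \<omega>'"
  unfolding ancestors_meet_def using An_mono by blast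

lemma descendants_meet_mono: "\<omega> \<le> \<omega>' \<Longrightarrow> descendants_meet u v \<omega> \<Longrightarrow> descendants_meet u v \<omega>'"
  unfolding descendants_meet_def using De_mono by blast

definition close_outside :: "edge set \<Rightarrow> (edge \<Rightarrow> bool) \<Rightarrow> (edge \<Rightarrow> bool)" where
  "close_outside F \<omega> = (\<lambda>e. e \<in> F \<and> \<omega> e)"

lemma close_outside_le: "close_outside F \<omega> \<le> \<omega>"
  by (auto simp: close_outside_def le_fun_def)

lemma close_outside_mono: "F \<subseteq> G \<Longrightarrow> close_outside F \<omega> \<le> close_outside G \<omega>"
  by (auto simp: close_outside_def le_fun_def)

lemma eventually_rtranclp_open_step_close_outside:
  fixes Fs :: "nat \<Rightarrow> edge set"
  assumes "mono Fs" and cover: "\<And>e. e \<in> Edges \<Longrightarrow> \<exists>n. e \<in> Fs n"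
  shows "(open_step \<omega>)\<^sup>*\<^sup>* u v \<Longrightarrow> \<forall>\<^sub>F n in sequentially. (open_step (close_outside (Fs n) \<omega>))\<^sup>*\<^sup>* u v"
proof (induction rule: rtranclp_induct)
  case base
  then show ?case by simp
next
  case (step y z)
  then have e: "(y, z) \<in> Edges" "\<omega> (y, z)" by (auto simp: open_step_def)
  then obtain M where "(y, z) \<in> Fs M" using cover by blast
  then have "\<forall>\<^sub>F n in sequentially. open_step (close_outside (Fs n) \<omega>) y z"
    using e \<open>mono Fs\<close> unfolding eventually_sequentially
    by (auto simp: open_step_def close_outside_def dest: monoD)
  with step.IH show ?case
    by eventually_elim (rule rtranclp.rtrancl_into_rtrancl)
qed

lemma ex_close_outside_ancestors_meet:
  fixes Fs :: "nat \<Rightarrow> edge set"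
  assumes "mono Fs" "\<And>e. e \<in> Edges \<Longrightarrow> \<exists>n. e \<in> Fs n" and "ancestors_meet u v \<omega>"
  shows "\<exists>n. ancestors_meet u v (close_outside (Fs n) \<omega>)"
proof -
  obtain w where "(open_step \<omega>)\<^sup>*\<^sup>* w u" "(open_step \<omega>)\<^sup>*\<^sup>* w v"
    using assms(3) by (auto simp: ancestors_meet_def An_def)
  then have "\<forall>\<^sub>F n in sequentially. (open_step (close_outside (Fs n) \<omega>))\<^sup>*\<^sup>* w u"
      "\<forall>\<^sub>F n in sequentially. (open_step (close_outside (Fs n) \<omega>))\<^sup>*\<^sup>* w v"
    by (simp_all add: eventually_rtranclp_open_step_close_outside[OF assms(1,2)])
  then have "\<forall>\<^sub>F n in sequentially. ancestors_meet u v (close_outside (Fs n) \<omega>)"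
    by eventually_elim (auto simp: ancestors_meet_def An_def)
  then show ?thesis by (auto simp: eventually_sequentially)
qed

lemma ex_close_outside_descendants_meet:
  fixes Fs :: "nat \<Rightarrow> edge set"
  assumes "mono Fs" "\<And>e. e \<in> Edges \<Longrightarrow> \<exists>n. e \<in> Fs n" and "descendants_meet u v \<omega>"
  shows "\<exists>n. descendants_meet u v (close_outside (Fs n) \<omega>)"
proof -
  obtain w where "(open_step \<omega>)\<^sup>*\<^sup>* u w" "(open_step \<omega>)\<^sup>*\<^sup>* v w"
    using assms(3) by (auto simp: descendants_meet_def De_def)
  then have "\<forall>\<^sub>F n in sequentially. (open_step (close_outside (Fs n) \<omega>))\<^sup>*\<^sup>* u w"
      "\<forall>\<^sub>F n in sequentially. (open_step (close_outside (Fs n) \<omega>))\<^sup>*\<^sup>* v w"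
    by (simp_all add: eventually_rtranclp_open_step_close_outside[OF assms(1,2)])
  then have "\<forall>\<^sub>F n in sequentially. descendants_meet u v (close_outside (Fs n) \<omega>)"
    by eventually_elim (auto simp: descendants_meet_def De_def)
  then show ?thesis by (auto simp: eventually_sequentially)
qed

subsection \<open>The Harris inequality for finitely many edges\<close>

lemma prob_Pi_pmf_bernoulli_insert:
  fixes U :: "('a \<Rightarrow> bool) set"
  assumes "finite F" "a \<notin> F" "0 \<le> p" "p \<le> 1"
  shows "measure_pmf.prob (Pi_pmf (insert a F) False (\<lambda>_. bernoulli_pmf p)) U =
    p * measure_pmf.prob (Pi_pmf F False (\<lambda>_. bernoulli_pmf p)) {f. f(a := True) \<in> U}
    + (1 - p) * measure_pmf.prob (Pi_pmf F False (\<lambda>_. bernoulli_pmf p)) {f. f(a := False) \<in> U}"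
proof -
  let ?Q = "Pi_pmf F False (\<lambda>_. bernoulli_pmf p)"
  define h where "h y = measure_pmf.prob ?Q {f. f(a := y) \<in> U}" for y
  have split: "Pi_pmf (insert a F) False (\<lambda>_. bernoulli_pmf p) =
      bind_pmf (bernoulli_pmf p) (\<lambda>y. map_pmf (\<lambda>f. f(a := y)) ?Q)"
    using assms by (simp add: Pi_pmf_insert' map_pmf_def)
  have "emeasure (Pi_pmf (insert a F) False (\<lambda>_. bernoulli_pmf p)) U =
      (\<integral>\<^sup>+y. ennreal (h y) \<partial>bernoulli_pmf p)"
    unfolding split emeasure_bind_pmf
    by (intro nn_integral_cong) (simp add: measure_pmf.emeasure_eq_measure h_def vimage_def)
  also have "\<dots> = ennreal (h True) * ennreal p + ennreal (h False) * ennreal (1 - p)"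
    using assms by simp
  also have "\<dots> = ennreal (p * h True + (1 - p) * h False)"
    using assms by (simp add: h_def ennreal_mult[symmetric] ennreal_plus mult.commute)
  finally have "ennreal (measure_pmf.prob (Pi_pmf (insert a F) False (\<lambda>_. bernoulli_pmf p)) U)
      = ennreal (p * h True + (1 - p) * h False)"
    by (simp add: measure_pmf.emeasure_eq_measure)
  moreover have "0 \<le> p * h True + (1 - p) * h False"
    using assms by (simp add: h_def)
  ultimately show ?thesis
    by (simp only: ennreal_inj[OF measure_nonneg] h_def)
qed

\<comment> \<open>Conditioning on one edge: the cross term is Chebyshev's sum inequality for two points.\<close>
lemma mixture_product_le:
  fixes p u0 u1 v0 v1 w0 w1 :: real
  assumes "0 \<le> p" "p \<le> 1" "u0 \<le> u1" "v0 \<le> v1" "u1 * v1 \<le> w1" "u0 * v0 \<le> w0"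
  shows "(p * u1 + (1 - p) * u0) * (p * v1 + (1 - p) * v0) \<le> p * w1 + (1 - p) * w0"
proof -
  have "(p * u1 + (1 - p) * u0) * (p * v1 + (1 - p) * v0)
      = p * (u1 * v1) + (1 - p) * (u0 * v0) - p * (1 - p) * ((u1 - u0) * (v1 - v0))"
    by algebra
  also have "\<dots> \<le> p * (u1 * v1) + (1 - p) * (u0 * v0)"
    using assms by simp
  also have "\<dots> \<le> p * w1 + (1 - p) * w0"
    using assms by (intro add_mono mult_left_mono) auto
  finally show ?thesis .
qed

lemma harris_Pi_pmf_bernoulli:
  fixes U V :: "('a \<Rightarrow> bool) set"
  assumes "finite F" "0 \<le> p" "p \<le> 1"
    and "\<And>x y. x \<in> U \<Longrightarrow> x \<le> y \<Longrightarrow> y \<in> U"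
    and "\<And>x y. x \<in> V \<Longrightarrow> x \<le> y \<Longrightarrow> y \<in> V"
  shows "measure_pmf.prob (Pi_pmf F False (\<lambda>_. bernoulli_pmf p)) U *
         measure_pmf.prob (Pi_pmf F False (\<lambda>_. bernoulli_pmf p)) V
       \<le> measure_pmf.prob (Pi_pmf F False (\<lambda>_. bernoulli_pmf p)) (U \<inter> V)"
  using assms(1,4,5)
proof (induction F arbitrary: U V rule: finite_induct)
  case empty
  then show ?case by (simp add: indicator_def)
next
  case (insert a F)
  let ?P = "measure_pmf.prob (Pi_pmf F False (\<lambda>_. bernoulli_pmf p))"
  define Uy where "Uy y = {f. f(a := y) \<in> U}" for y
  define Vy where "Vy y = {f. f(a := y) \<in> V}" for y
  have upd_le: "f(a := y) \<le> g(a := y)" if "f \<le> g" for f g :: "'a \<Rightarrow> bool" and y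
    using that by (auto simp: le_fun_def)
  have le_False_True: "f(a := False) \<le> f(a := True)" for f :: "'a \<Rightarrow> bool"
    by (auto simp: le_fun_def)
  have IH: "?P (Uy y) * ?P (Vy y) \<le> ?P (Uy y \<inter> Vy y)" for y
    by (rule insert.IH)
       (auto simp: Uy_def Vy_def, metis insert.prems(1) upd_le, metis insert.prems(2) upd_le)
  have mono_U: "?P (Uy False) \<le> ?P (Uy True)"
    by (intro measure_pmf.finite_measure_mono) (auto simp: Uy_def intro: insert.prems(1) le_False_True)
  have mono_V: "?P (Vy False) \<le> ?P (Vy True)"
    by (intro measure_pmf.finite_measure_mono) (auto simp: Vy_def intro: insert.prems(2) le_False_True)
  have split: "measure_pmf.prob (Pi_pmf (insert a F) False (\<lambda>_. bernoulli_pmf p)) W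
      = p * ?P {f. f(a := True) \<in> W} + (1 - p) * ?P {f. f(a := False) \<in> W}" for W
    by (rule prob_Pi_pmf_bernoulli_insert[OF insert.hyps assms(2,3)])
  have "{f. f(a := y) \<in> U \<inter> V} = Uy y \<inter> Vy y" for y
    by (auto simp: Uy_def Vy_def)
  then show ?case
    unfolding split
    using mixture_product_le[OF assms(2,3) mono_U mono_V IH[of True] IH[of False]]
    by (simp add: Uy_def Vy_def)
qed

subsection \<open>From finitely many edges to the whole lattice\<close>

lemma prob_space_perc: "prob_space (perc p)"
  unfolding perc_def by (intro prob_space_PiM) (simp add: measure_pmf.prob_space_axioms)

lemma space_perc: "space (perc p) = PiE Edges (\<lambda>_. UNIV)"
  unfolding perc_def by (simp add: space_PiM)

definition cylinder :: "edge set \<Rightarrow> (edge \<Rightarrow> bool) \<Rightarrow> (edge \<Rightarrow> bool) set" where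
  "cylinder F x = {\<omega> \<in> PiE Edges (\<lambda>_. UNIV). \<forall>e \<in> F. \<omega> e = x e}"

lemma cylinder_close_outside:
  assumes "x \<in> PiE_dflt F False (\<lambda>_. UNIV)"
  shows "\<omega> \<in> cylinder F x \<longleftrightarrow> \<omega> \<in> space (perc p) \<and> close_outside F \<omega> = x"
proof -
  have "x e = False" if "e \<notin> F" for e
    using assms that unfolding PiE_dflt_def by blast
  then have "close_outside F \<omega> = x \<longleftrightarrow> (\<forall>e\<in>F. \<omega> e = x e)"
    unfolding close_outside_def fun_eq_iff by metis
  then show ?thesis
    by (simp add: cylinder_def space_perc)
qed

lemma
  assumes "finite F" "F \<subseteq> Edges"
  shows sets_perc_cylinder: "cylinder F x \<in> sets (perc p)"
    and measure_perc_cylinder: "measure (perc p) (cylinder F x) = (\<Prod>e\<in>F. pmf (bernoulli_pmf p) (x e))"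
proof -
  interpret prob_space "perc p" by (rule prob_space_perc)
  let ?M = "\<lambda>_::edge. measure_pmf (bernoulli_pmf p)"
  have cyl: "cylinder F x = prod_emb Edges ?M F (PiE F (\<lambda>e. {x e}))"
    using assms(2) unfolding cylinder_def set_eq_iff prod_emb_iff by (auto simp: PiE_iff)
  then show "cylinder F x \<in> sets (perc p)"
    unfolding perc_def by (auto intro!: sets_PiM_I assms)
  have "emeasure (perc p) (cylinder F x) = (\<Prod>e\<in>F. emeasure (?M e) {x e})"
    unfolding perc_def cyl
    by (intro emeasure_PiM_emb assms) (auto simp: measure_pmf.prob_space_axioms)
  also have "\<dots> = ennreal (\<Prod>e\<in>F. pmf (bernoulli_pmf p) (x e))"
    by (simp add: emeasure_pmf_single prod_ennreal)
  finally show "measure (perc p) (cylinder F x) = (\<Prod>e\<in>F. pmf (bernoulli_pmf p) (x e))"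
    by (simp add: emeasure_eq_measure prod_nonneg)
qed

lemma
  fixes Q :: "(edge \<Rightarrow> bool) \<Rightarrow> bool"
  assumes "finite F" "F \<subseteq> Edges"
  shows sets_perc_close_outside: "{\<omega> \<in> space (perc p). Q (close_outside F \<omega>)} \<in> sets (perc p)"
    and measure_perc_close_outside: "measure (perc p) {\<omega> \<in> space (perc p). Q (close_outside F \<omega>)}
          = measure_pmf.prob (Pi_pmf F False (\<lambda>_. bernoulli_pmf p)) {x. Q x}"
proof -
  interpret prob_space "perc p" by (rule prob_space_perc)
  let ?Q = "Pi_pmf F False (\<lambda>_. bernoulli_pmf p)"
  define S where "S = {x \<in> PiE_dflt F False (\<lambda>_. UNIV). Q x}"
  have "finite S"
    unfolding S_def using assms(1) by (intro finite_subset[OF _ finite_PiE_dflt]) auto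
  have cylinder_S: "\<omega> \<in> cylinder F x \<longleftrightarrow> \<omega> \<in> space (perc p) \<and> close_outside F \<omega> = x"
    if "x \<in> S" for x \<omega>
    using that cylinder_close_outside[of x F \<omega> p] unfolding S_def by blast
  have "close_outside F \<omega> \<in> PiE_dflt F False (\<lambda>_. UNIV)" for \<omega>
    by (simp add: PiE_dflt_def close_outside_def)
  then have event: "{\<omega> \<in> space (perc p). Q (close_outside F \<omega>)} = (\<Union>x\<in>S. cylinder F x)"
    by (auto simp: cylinder_S) (auto simp: S_def)
  have "disjoint_family_on (cylinder F) S"
    unfolding disjoint_family_on_def by (auto simp: cylinder_S)
  then have "measure (perc p) {\<omega> \<in> space (perc p). Q (close_outside F \<omega>)}
      = (\<Sum>x\<in>S. measure (perc p) (cylinder F x))"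
    unfolding event using \<open>finite S\<close> sets_perc_cylinder[OF assms(1,2)]
    by (intro measure_finite_Union) auto
  also have "\<dots> = (\<Sum>x\<in>S. \<Prod>e\<in>F. pmf (bernoulli_pmf p) (x e))"
    by (simp add: measure_perc_cylinder[OF assms(1,2)])
  also have "\<dots> = (\<Sum>x\<in>S. pmf ?Q x)"
  proof (rule sum.cong[OF refl])
    fix x assume "x \<in> S"
    then show "(\<Prod>e\<in>F. pmf (bernoulli_pmf p) (x e)) = pmf ?Q x"
      using assms(1) by (subst pmf_Pi') (auto simp: S_def PiE_dflt_def)
  qed
  also have "\<dots> = measure_pmf.prob ?Q S"
    using \<open>finite S\<close> by (simp add: measure_measure_pmf_finite)
  also have "\<dots> = measure_pmf.prob ?Q {x. Q x}"
    using set_Pi_pmf_subset'[OF assms(1), of False "\<lambda>_. bernoulli_pmf p"]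
    by (intro measure_eq_AE AE_pmfI) (auto simp: S_def PiE_dflt_def)
  finally show "measure (perc p) {\<omega> \<in> space (perc p). Q (close_outside F \<omega>)}
      = measure_pmf.prob ?Q {x. Q x}" .
  show "{\<omega> \<in> space (perc p). Q (close_outside F \<omega>)} \<in> sets (perc p)"
    unfolding event using \<open>finite S\<close> sets_perc_cylinder[OF assms(1,2)] by auto
qed

lemma perc_increasing_event_limit:
  fixes Fs :: "nat \<Rightarrow> edge set" and Q :: "(edge \<Rightarrow> bool) \<Rightarrow> bool"
  assumes Fs: "mono Fs" "\<And>n. finite (Fs n)" "\<And>n. Fs n \<subseteq> Edges"
    and increasing: "\<And>\<omega> \<omega>'. \<omega> \<le> \<omega>' \<Longrightarrow> Q \<omega> \<Longrightarrow> Q \<omega>'"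
    and approx: "\<And>\<omega>. Q \<omega> \<Longrightarrow> \<exists>n. Q (close_outside (Fs n) \<omega>)"
  shows "{\<omega> \<in> space (perc p). Q \<omega>} \<in> sets (perc p)"
    and "(\<lambda>n. measure_pmf.prob (Pi_pmf (Fs n) False (\<lambda>_. bernoulli_pmf p)) {x. Q x})
           \<longlonglongrightarrow> measure (perc p) {\<omega> \<in> space (perc p). Q \<omega>}"
proof -
  interpret prob_space "perc p" by (rule prob_space_perc)
  define E where "E n = {\<omega> \<in> space (perc p). Q (close_outside (Fs n) \<omega>)}" for n
  note finite_event = sets_perc_close_outside[OF Fs(2,3)] measure_perc_close_outside[OF Fs(2,3)]
  have union: "{\<omega> \<in> space (perc p). Q \<omega>} = (\<Union>n. E n)"
    using approx increasing[OF close_outside_le] by (auto simp: E_def)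
  have "incseq E"
    using increasing[OF close_outside_mono[OF monoD[OF \<open>mono Fs\<close>]]]
    by (auto simp: incseq_def E_def)
  moreover have "E n \<in> sets (perc p)" for n
    unfolding E_def by (rule finite_event(1))
  ultimately show "{\<omega> \<in> space (perc p). Q \<omega>} \<in> sets (perc p)"
    and "(\<lambda>n. measure_pmf.prob (Pi_pmf (Fs n) False (\<lambda>_. bernoulli_pmf p)) {x. Q x})
           \<longlonglongrightarrow> measure (perc p) {\<omega> \<in> space (perc p). Q \<omega>}"
    unfolding union using finite_Lim_measure_incseq[of E] finite_event(2)
    by (auto simp: E_def)
qed

theorem harris_perc:
  fixes Fs :: "nat \<Rightarrow> edge set" and Q R :: "(edge \<Rightarrow> bool) \<Rightarrow> bool"
  assumes p: "0 \<le> p" "p \<le> 1"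
    and Fs: "mono Fs" "\<And>n. finite (Fs n)" "\<And>n. Fs n \<subseteq> Edges"
    and Q: "\<And>\<omega> \<omega>'. \<omega> \<le> \<omega>' \<Longrightarrow> Q \<omega> \<Longrightarrow> Q \<omega>'" "\<And>\<omega>. Q \<omega> \<Longrightarrow> \<exists>n. Q (close_outside (Fs n) \<omega>)"
    and R: "\<And>\<omega> \<omega>'. \<omega> \<le> \<omega>' \<Longrightarrow> R \<omega> \<Longrightarrow> R \<omega>'" "\<And>\<omega>. R \<omega> \<Longrightarrow> \<exists>n. R (close_outside (Fs n) \<omega>)"
  shows "measure (perc p) {\<omega> \<in> space (perc p). Q \<omega>} * measure (perc p) {\<omega> \<in> space (perc p). R \<omega>}
       \<le> measure (perc p) {\<omega> \<in> space (perc p). Q \<omega> \<and> R \<omega>}"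
proof -
  have QR_increasing: "Q \<omega>' \<and> R \<omega>'" if "\<omega> \<le> \<omega>'" "Q \<omega> \<and> R \<omega>" for \<omega> \<omega>'
    using that Q(1) R(1) by blast
  have QR_approx: "\<exists>n. Q (close_outside (Fs n) \<omega>) \<and> R (close_outside (Fs n) \<omega>)"
    if QR: "Q \<omega> \<and> R \<omega>" for \<omega>
  proof -
    obtain m n where "Q (close_outside (Fs m) \<omega>)" "R (close_outside (Fs n) \<omega>)"
      using QR Q(2) R(2) by blast
    moreover have "close_outside (Fs k) \<omega> \<le> close_outside (Fs (max m n)) \<omega>" if "k \<le> max m n" for k
      using that by (intro close_outside_mono monoD[OF \<open>mono Fs\<close>])
    ultimately show ?thesis
      using Q(1) R(1) by (meson max.cobounded1 max.cobounded2)
  qed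
  note limit = perc_increasing_event_limit(2)[OF Fs]
  have finite_harris: "measure_pmf.prob (Pi_pmf (Fs n) False (\<lambda>_. bernoulli_pmf p)) {x. Q x} *
      measure_pmf.prob (Pi_pmf (Fs n) False (\<lambda>_. bernoulli_pmf p)) {x. R x}
      \<le> measure_pmf.prob (Pi_pmf (Fs n) False (\<lambda>_. bernoulli_pmf p)) {x. Q x \<and> R x}" for n
    using harris_Pi_pmf_bernoulli[OF Fs(2) p, of "{x. Q x}" "{x. R x}"] Q(1) R(1)
    by (auto simp: Collect_conj_eq)
  show ?thesis
    by (rule LIMSEQ_le[OF tendsto_mult[OF limit[OF Q] limit[OF R]]
          limit[of "\<lambda>\<omega>. Q \<omega> \<and> R \<omega>", OF QR_increasing QR_approx]])
       (use finite_harris in auto)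
qed

subsection \<open>Reflection through \<open>\<ell>/2\<close>\<close>

definition reflect :: "node \<Rightarrow> node \<Rightarrow> node" where
  "reflect l u = (fst l - fst u, snd l - snd u)"

definition reflect_edge :: "node \<Rightarrow> edge \<Rightarrow> edge" where
  "reflect_edge l e = (reflect l (snd e), reflect l (fst e))"

lemma reflect_reflect [simp]: "reflect l (reflect l u) = u"
  by (simp add: reflect_def)

lemma reflect_edge_reflect_edge [simp]: "reflect_edge l (reflect_edge l e) = e"
  by (simp add: reflect_edge_def)

lemma reflect_swap: "reflect l l = (0, 0)" "reflect l (0, 0) = l"
  by (simp_all add: reflect_def)

lemma inj_reflect: "inj (reflect l)"
  by (metis injI reflect_reflect)

lemma Edges_reflect: "(u, v) \<in> Edges \<longleftrightarrow> (reflect l v, reflect l u) \<in> Edges"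
  by (cases u, cases v) (auto simp: Edges_def reflect_def)

lemma open_step_comp_reflect_edge:
  "open_step (\<omega> \<circ> reflect_edge l) u v \<longleftrightarrow> open_step \<omega> (reflect l v) (reflect l u)"
  using Edges_reflect[of u v l] by (auto simp: open_step_def reflect_edge_def)

lemma rtranclp_map_converse:
  assumes "\<And>x y. P x y \<Longrightarrow> Q (f y) (f x)"
  shows "P\<^sup>*\<^sup>* a b \<Longrightarrow> Q\<^sup>*\<^sup>* (f b) (f a)"
  by (induction rule: rtranclp_induct) (auto intro: converse_rtranclp_into_rtranclp assms)

lemma rtranclp_open_step_comp_reflect_edge:
  "(open_step (\<omega> \<circ> reflect_edge l))\<^sup>*\<^sup>* u v \<longleftrightarrow> (open_step \<omega>)\<^sup>*\<^sup>* (reflect l v) (reflect l u)"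
proof
  assume "(open_step (\<omega> \<circ> reflect_edge l))\<^sup>*\<^sup>* u v"
  then show "(open_step \<omega>)\<^sup>*\<^sup>* (reflect l v) (reflect l u)"
    by (rule rtranclp_map_converse[rotated]) (simp add: open_step_comp_reflect_edge)
next
  assume "(open_step \<omega>)\<^sup>*\<^sup>* (reflect l v) (reflect l u)"
  then have "(open_step (\<omega> \<circ> reflect_edge l))\<^sup>*\<^sup>* (reflect l (reflect l u)) (reflect l (reflect l v))"
    by (rule rtranclp_map_converse[rotated]) (simp add: open_step_comp_reflect_edge)
  then show "(open_step (\<omega> \<circ> reflect_edge l))\<^sup>*\<^sup>* u v" by simp
qed

lemma An_comp_reflect_edge: "An (\<omega> \<circ> reflect_edge l) u = reflect l ` De \<omega> (reflect l u)"
  unfolding An_def De_def rtranclp_open_step_comp_reflect_edge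
  by (auto intro: image_eqI[where x = "reflect l _"])

lemma ancestors_meet_comp_reflect_edge:
  "ancestors_meet u v (\<omega> \<circ> reflect_edge l) \<longleftrightarrow> descendants_meet (reflect l u) (reflect l v) \<omega>"
  unfolding ancestors_meet_def descendants_meet_def An_comp_reflect_edge
  by (simp add: image_Int[OF inj_reflect, symmetric])

\<comment> \<open>The box of radius \<open>n\<close> around \<open>\<ell>/2\<close>, with coordinates doubled to stay in \<open>\<int>\<close>.\<close>
definition box :: "node \<Rightarrow> nat \<Rightarrow> node set" where
  "box l n = {u. \<bar>2 * fst u - fst l\<bar> \<le> 2 * int n \<and> \<bar>2 * snd u - snd l\<bar> \<le> 2 * int n}"

definition box_edges :: "node \<Rightarrow> nat \<Rightarrow> edge set" where
  "box_edges l n = {e \<in> Edges. fst e \<in> box l n \<and> snd e \<in> box l n}"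

lemma reflect_box: "u \<in> box l n \<Longrightarrow> reflect l u \<in> box l n"
  by (auto simp: box_def reflect_def abs_minus_commute)

lemma reflect_edge_box_edges: "e \<in> box_edges l n \<Longrightarrow> reflect_edge l e \<in> box_edges l n"
  using Edges_reflect[of "fst e" "snd e" l] reflect_box
  by (auto simp: box_edges_def reflect_edge_def)

lemma bij_betw_reflect_edge_box_edges: "bij_betw (reflect_edge l) (box_edges l n) (box_edges l n)"
  by (rule bij_betw_byWitness[where f' = "reflect_edge l"]) (auto intro: reflect_edge_box_edges)

lemma finite_box: "finite (box l n)"
proof -
  define N where "N = int n + \<bar>fst l\<bar> + \<bar>snd l\<bar>"
  have "box l n \<subseteq> {-N..N} \<times> {-N..N}"
    by (auto simp: box_def N_def)
  then show ?thesis by (rule finite_subset) simp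
qed

lemma finite_box_edges: "finite (box_edges l n)"
  by (rule finite_subset[of _ "box l n \<times> box l n"]) (auto simp: box_edges_def finite_box)

lemma box_edges_subset_Edges: "box_edges l n \<subseteq> Edges"
  by (auto simp: box_edges_def)

lemma mono_box_edges: "mono (box_edges l)"
  by (rule monoI) (auto simp: box_edges_def box_def)

lemma box_edges_exhaust: "\<exists>n. e \<in> box_edges l n" if "e \<in> Edges"
proof -
  obtain u v where e: "e = (u, v)" by (metis surj_pair)
  let ?n = "nat (\<bar>2 * fst u - fst l\<bar> + \<bar>2 * snd u - snd l\<bar> + \<bar>2 * fst v - fst l\<bar> + \<bar>2 * snd v - snd l\<bar>)"
  have "e \<in> box_edges l ?n" using that unfolding e box_edges_def box_def by auto
  then show ?thesis by blast
qed

lemma prob_Pi_pmf_comp_bij_betw: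
  assumes "finite F" "bij_betw h F F" "\<And>x. x \<notin> F \<Longrightarrow> h x \<notin> F"
  shows "measure_pmf.prob (Pi_pmf F d (\<lambda>_. M)) {x. Q (x \<circ> h)} = measure_pmf.prob (Pi_pmf F d (\<lambda>_. M)) {x. Q x}"
proof -
  have "measure_pmf.prob (Pi_pmf F d (\<lambda>_. M)) {x. Q (x \<circ> h)}
      = measure_pmf.prob (map_pmf (\<lambda>g. g \<circ> h) (Pi_pmf F d (\<lambda>_. M))) {x. Q x}"
    by (simp add: vimage_def)
  also have "map_pmf (\<lambda>g. g \<circ> h) (Pi_pmf F d (\<lambda>_. M)) = Pi_pmf F d (\<lambda>_. M)"
    by (rule Pi_pmf_bij_betw[OF assms, symmetric])
  finally show ?thesis .
qed

lemma
  fixes l :: node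
  shows sets_ancestors_meet: "{\<omega> \<in> space (perc p). ancestors_meet l (0, 0) \<omega>} \<in> sets (perc p)"
    and tendsto_ancestors_meet:
      "(\<lambda>n. measure_pmf.prob (Pi_pmf (box_edges l n) False (\<lambda>_. bernoulli_pmf p)) {x. ancestors_meet l (0, 0) x})
         \<longlonglongrightarrow> measure (perc p) {\<omega> \<in> space (perc p). ancestors_meet l (0, 0) \<omega>}"
  using perc_increasing_event_limit[of "box_edges l" "ancestors_meet l (0, 0)", OF mono_box_edges
      finite_box_edges box_edges_subset_Edges ancestors_meet_mono
      ex_close_outside_ancestors_meet[OF mono_box_edges box_edges_exhaust]]
  by auto

lemma
  fixes l :: node
  shows sets_descendants_meet: "{\<omega> \<in> space (perc p). descendants_meet l (0, 0) \<omega>} \<in> sets (perc p)"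
    and tendsto_descendants_meet:
      "(\<lambda>n. measure_pmf.prob (Pi_pmf (box_edges l n) False (\<lambda>_. bernoulli_pmf p)) {x. descendants_meet l (0, 0) x})
         \<longlonglongrightarrow> measure (perc p) {\<omega> \<in> space (perc p). descendants_meet l (0, 0) \<omega>}"
  using perc_increasing_event_limit[of "box_edges l" "descendants_meet l (0, 0)", OF mono_box_edges
      finite_box_edges box_edges_subset_Edges descendants_meet_mono
      ex_close_outside_descendants_meet[OF mono_box_edges box_edges_exhaust]]
  by auto

lemma measure_ancestors_meet_eq_descendants_meet:
  fixes l :: node
  shows "measure (perc p) {\<omega> \<in> space (perc p). ancestors_meet l (0, 0) \<omega>}
       = measure (perc p) {\<omega> \<in> space (perc p). descendants_meet l (0, 0) \<omega>}"
proof -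
  have outside: "reflect_edge l e \<notin> box_edges l n" if "e \<notin> box_edges l n" for e n
    using that reflect_edge_box_edges[of "reflect_edge l e" l n] by auto
  have "ancestors_meet l (0, 0) (x \<circ> reflect_edge l) \<longleftrightarrow> descendants_meet l (0, 0) x" for x
    by (auto simp: ancestors_meet_comp_reflect_edge reflect_swap descendants_meet_def)
  then have "measure_pmf.prob (Pi_pmf (box_edges l n) False (\<lambda>_. bernoulli_pmf p)) {x. descendants_meet l (0, 0) x}
      = measure_pmf.prob (Pi_pmf (box_edges l n) False (\<lambda>_. bernoulli_pmf p)) {x. ancestors_meet l (0, 0) x}" for n
    using prob_Pi_pmf_comp_bij_betw[OF finite_box_edges bij_betw_reflect_edge_box_edges outside,
        where d = False and M = "bernoulli_pmf p" and Q = "ancestors_meet l (0, 0)"]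
    by simp
  then have "(\<lambda>n. measure_pmf.prob (Pi_pmf (box_edges l n) False (\<lambda>_. bernoulli_pmf p)) {x. ancestors_meet l (0, 0) x})
      \<longlonglongrightarrow> measure (perc p) {\<omega> \<in> space (perc p). descendants_meet l (0, 0) \<omega>}"
    using tendsto_descendants_meet[where l = l and p = p] by simp
  then show ?thesis
    using tendsto_ancestors_meet[where l = l and p = p] by (rule LIMSEQ_unique[rotated])
qed

lemma one_minus_sqrt_le:
  fixes a c :: real
  assumes "a * a \<le> c" "a \<le> 1"
  shows "1 - sqrt (1 - (a + a - c)) \<le> a"
proof -
  have "(1 - a)\<^sup>2 \<le> 1 - (a + a - c)"
    using assms(1) by (simp add: power2_eq_square algebra_simps)
  then have "1 - a \<le> sqrt (1 - (a + a - c))"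
    by (rule real_le_rsqrt)
  then show ?thesis by simp
qed

theorem mainTheorem4:
  fixes p :: real and l :: node
  assumes "0 \<le> p" and "p \<le> 1"
  defines "\<Sigma> \<equiv> {\<omega> \<in> space (perc p).
              An \<omega> l \<inter> An \<omega> (0, 0) \<noteq> {} \<or> De \<omega> l \<inter> De \<omega> (0, 0) \<noteq> {}}"
  shows "measure (perc p) {\<omega> \<in> space (perc p). An \<omega> l \<inter> An \<omega> (0, 0) \<noteq> {}}
           \<ge> 1 - sqrt (1 - measure (perc p) \<Sigma>)"
proof -
  interpret prob_space "perc p" by (rule prob_space_perc)
  define A where "A = {\<omega> \<in> space (perc p). ancestors_meet l (0, 0) \<omega>}"
  define D where "D = {\<omega> \<in> space (perc p). descendants_meet l (0, 0) \<omega>}"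
  have "A \<in> sets (perc p)" "D \<in> sets (perc p)"
    unfolding A_def D_def by (rule sets_ancestors_meet sets_descendants_meet)+
  moreover have "\<Sigma> = A \<union> D"
    by (auto simp: \<Sigma>_def A_def D_def ancestors_meet_def descendants_meet_def)
  ultimately have union: "measure (perc p) \<Sigma> = measure (perc p) A + measure (perc p) D - measure (perc p) (A \<inter> D)"
    by (simp add: measure_Un3 fmeasurable_eq_sets)
  have symmetric: "measure (perc p) D = measure (perc p) A"
    unfolding A_def D_def by (rule measure_ancestors_meet_eq_descendants_meet[symmetric])
  have "measure (perc p) A * measure (perc p) D
      \<le> measure (perc p) {\<omega> \<in> space (perc p). ancestors_meet l (0, 0) \<omega> \<and> descendants_meet l (0, 0) \<omega>}"
    unfolding A_def D_def
    by (rule harris_perc[OF assms(1,2) mono_box_edges finite_box_edges box_edges_subset_Edges])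
       (auto intro: ancestors_meet_mono descendants_meet_mono
         ex_close_outside_ancestors_meet[OF mono_box_edges box_edges_exhaust]
         ex_close_outside_descendants_meet[OF mono_box_edges box_edges_exhaust])
  also have "{\<omega> \<in> space (perc p). ancestors_meet l (0, 0) \<omega> \<and> descendants_meet l (0, 0) \<omega>} = A \<inter> D"
    by (auto simp: A_def D_def)
  finally have harris: "measure (perc p) A * measure (perc p) D \<le> measure (perc p) (A \<inter> D)" .
  from harris union symmetric show ?thesis
    using one_minus_sqrt_le[of "measure (perc p) A"] by (simp add: A_def ancestors_meet_def)
qed

end
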